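(* Let $\alpha>1$, $\varepsilon>0$, $\delta\in(0,1)$, and let $\pi^*$ be the function defined by $\pi^*(0)=0$, $\pi^*(n)=L(\pi^*(n-1))$ for $n>0$, where $L(q)=\max\{p\in[q,1]: D^\delta_\alpha(\mathrm{Ber}(p)\|\mathrm{Ber}(q))\le\varepsilon \text{ and } D^\delta_\alpha(\mathrm{Ber}(q)\|\mathrm{Ber}(p))\le\varepsilon\}$. Suppose $\pi^*(2) > 3\,\pi^*(1)$. Then, for the universe $U=\{1,2\}$, there is no optimal partition selection mechanism for $(\delta,\alpha,\varepsilon)$-RDP with $\Delta_1 = 2$; that is, there is no partition selection mechanism $M^*$ that is $(\delta,\alpha,\varepsilon)$-RDP for $\Delta_1=2$ such that $\mathbb{E}[|M^*(X)|]\ge\mathbb{E}[|M(X)|]$ for every dataset $X$ and every partition selection mechanism $M$ that is $(\delta,\alpha,\varepsilon)$-RDP for $\Delta_1 = 2$.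
   Context: $\mathrm{Ber}(p)$: Bernoulli distribution. For $\alpha>1$, $D_\alpha(P\|Q)=\frac{1}{\alpha-1}\log\sum_x P(x)^\alpha Q(x)^{1-\alpha}$ and $D^\delta_\alpha(P\|Q)=\inf\{D_\alpha(P'\|Q'): P=(1-\delta)P'+\delta P'',\ Q=(1-\delta)Q'+\delta Q''\}$ over probability distributions. A randomized algorithm $M$ is $(\delta,\alpha,\varepsilon)$-RDP w.r.t. a neighboring relation if $D^\delta_\alpha(M(X)\|M(X'))\le\varepsilon$ for all neighbors $X,X'$ (both orders). Datasets are $X\in\mathbb{Z}_{\ge0}^U$; $X, X'$ are neighbors for $\Delta_1=\Delta$ if $\|X-X'\|_1\le\Delta$. A partition selection mechanism is a randomized map $M$ from datasets to subsets of $U$ with $M(X)\subseteq\{u: X_u>0\}$ always. *)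

theory Defs
  imports "HOL-Probability.Probability"
begin

definition renyi_div :: "real \<Rightarrow> 'a pmf \<Rightarrow> 'a pmf \<Rightarrow> ereal" where
  "renyi_div \<alpha> P Q =
    (let S = (\<integral>\<^sup>+ x. (if pmf P x = 0 then 0
                       else if pmf Q x = 0 then \<infinity>
                       else ennreal (pmf P x powr \<alpha> * pmf Q x powr (1 - \<alpha>))) \<partial>count_space UNIV)
     in if S = \<infinity> then \<infinity> else ereal (ln (enn2real S) / (\<alpha> - 1)))"

definition approx_renyi_div :: "real \<Rightarrow> real \<Rightarrow> 'a pmf \<Rightarrow> 'a pmf \<Rightarrow> ereal" where
  "approx_renyi_div \<delta> \<alpha> P Q =
    Inf {renyi_div \<alpha> P' Q' | P' P'' Q' Q''.
           (\<forall>x. pmf P x = (1 - \<delta>) * pmf P' x + \<delta> * pmf P'' x) \<and>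
           (\<forall>x. pmf Q x = (1 - \<delta>) * pmf Q' x + \<delta> * pmf Q'' x)}"

definition L_fun :: "real \<Rightarrow> real \<Rightarrow> real \<Rightarrow> real \<Rightarrow> real" where
  "L_fun \<delta> \<alpha> \<epsilon> q = (GREATEST p. q \<le> p \<and> p \<le> 1 \<and>
      approx_renyi_div \<delta> \<alpha> (bernoulli_pmf p) (bernoulli_pmf q) \<le> ereal \<epsilon> \<and>
      approx_renyi_div \<delta> \<alpha> (bernoulli_pmf q) (bernoulli_pmf p) \<le> ereal \<epsilon>)"

primrec pi_star :: "real \<Rightarrow> real \<Rightarrow> real \<Rightarrow> nat \<Rightarrow> real" where
  "pi_star \<delta> \<alpha> \<epsilon> 0 = 0"
| "pi_star \<delta> \<alpha> \<epsilon> (Suc n) = L_fun \<delta> \<alpha> \<epsilon> (pi_star \<delta> \<alpha> \<epsilon> n)"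

definition dataset :: "'u set \<Rightarrow> ('u \<Rightarrow> nat) \<Rightarrow> bool" where
  "dataset U X \<longleftrightarrow> (\<forall>u. u \<notin> U \<longrightarrow> X u = 0)"

definition l1_neighbors :: "'u set \<Rightarrow> nat \<Rightarrow> ('u \<Rightarrow> nat) \<Rightarrow> ('u \<Rightarrow> nat) \<Rightarrow> bool" where
  "l1_neighbors U \<Delta> X X' \<longleftrightarrow> (\<Sum>u\<in>U. \<bar>int (X u) - int (X' u)\<bar>) \<le> int \<Delta>"

definition partition_selection :: "'u set \<Rightarrow> (('u \<Rightarrow> nat) \<Rightarrow> 'u set pmf) \<Rightarrow> bool" where
  "partition_selection U M \<longleftrightarrow>
     (\<forall>X. dataset U X \<longrightarrow> (\<forall>S \<in> set_pmf (M X). S \<subseteq> {u \<in> U. X u > 0}))"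

definition is_rdp :: "'u set \<Rightarrow> nat \<Rightarrow> real \<Rightarrow> real \<Rightarrow> real \<Rightarrow> (('u \<Rightarrow> nat) \<Rightarrow> 'b pmf) \<Rightarrow> bool" where
  "is_rdp U \<Delta> \<delta> \<alpha> \<epsilon> M \<longleftrightarrow>
     (\<forall>X X'. dataset U X \<longrightarrow> dataset U X' \<longrightarrow> l1_neighbors U \<Delta> X X' \<longrightarrow>
        approx_renyi_div \<delta> \<alpha> (M X) (M X') \<le> ereal \<epsilon> \<and>
        approx_renyi_div \<delta> \<alpha> (M X') (M X) \<le> ereal \<epsilon>)"

definition expected_size :: "'u set pmf \<Rightarrow> real" where
  "expected_size D = measure_pmf.expectation D (\<lambda>S. real (card S))"

end

theory Submission
  imports Defs
begin

text \<open>Suppose \<open>M\<close> were optimal. Releasing \<open>{1, 2}\<close> with probability \<open>\<delta>\<close> whenever both counts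
  are positive is admissible, so \<open>E |M(1, 1)| \<ge> 2 \<delta>\<close>. A finite \<open>\<delta>\<close>-approximate divergence lets a
  distribution put at most mass \<open>\<delta>\<close> where its neighbour vanishes; as \<open>(0, 0)\<close> is a neighbour of
  \<open>(1, 1)\<close>, the nonempty mass of \<open>M(1, 1)\<close> is at most \<open>\<delta>\<close>, hence all of it sits on \<open>{1, 2}\<close>.
  At \<open>(3, 1)\<close> the neighbours \<open>(1, 1)\<close> and \<open>(3, 0)\<close> then cap the mass of \<open>{1}\<close> and of the
  sets containing \<open>2\<close> by \<open>\<delta>\<close> each, so \<open>E |M(3, 1)| \<le> 3 \<delta>\<close>. But releasing \<open>{1}\<close> with
  probability \<open>\<pi>\<^sup>*(2)\<close> for counts \<open>\<ge> 3\<close>, \<open>\<pi>\<^sup>*(1) = \<delta>\<close> for counts \<open>1, 2\<close> and \<open>0\<close> otherwise is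
  admissible and achieves \<open>\<pi>\<^sup>*(2) > 3 \<delta>\<close>.

  For this, \<open>\<pi>\<^sup>*(2) = L(\<delta>)\<close> must be a genuine maximum: for Bernoulli distributions the infimum
  defining the approximate divergence is attained and the Renyi divergence is lower
  semicontinuous, so the admissible set of \<open>L(\<delta>)\<close> is compact.\<close>

definition renyi_term :: "real \<Rightarrow> 'a pmf \<Rightarrow> 'a pmf \<Rightarrow> 'a \<Rightarrow> ennreal" where
  "renyi_term \<alpha> P Q x =
    (if pmf P x = 0 then 0 else if pmf Q x = 0 then \<infinity>
     else ennreal (pmf P x powr \<alpha> * pmf Q x powr (1 - \<alpha>)))"

lemma renyi_div_eq:
  "renyi_div \<alpha> P Q =
    (let S = \<integral>\<^sup>+ x. renyi_term \<alpha> P Q x \<partial>count_space UNIV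
     in if S = \<infinity> then \<infinity> else ereal (ln (enn2real S) / (\<alpha> - 1)))"
  unfolding renyi_div_def renyi_term_def ..

lemma renyi_div_finite_imp_pmf_nonzero:
  assumes "renyi_div \<alpha> P Q \<noteq> \<infinity>" "pmf P x \<noteq> 0"
  shows "pmf Q x \<noteq> 0"
proof
  assume "pmf Q x = 0"
  then have "renyi_term \<alpha> P Q x = \<infinity>"
    using assms(2) by (simp add: renyi_term_def)
  moreover have "renyi_term \<alpha> P Q x \<le> (\<integral>\<^sup>+ y. renyi_term \<alpha> P Q y \<partial>count_space UNIV)"
  proof -
    have "renyi_term \<alpha> P Q x = (\<integral>\<^sup>+ y. renyi_term \<alpha> P Q x * indicator {x} y \<partial>count_space UNIV)"
      by (simp add: nn_integral_cmult_indicator)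
    also have "\<dots> \<le> (\<integral>\<^sup>+ y. renyi_term \<alpha> P Q y \<partial>count_space UNIV)"
      by (rule nn_integral_mono) (simp split: split_indicator)
    finally show ?thesis .
  qed
  ultimately show False
    using assms(1) by (simp add: renyi_div_eq top_unique)
qed

lemma renyi_div_self: "renyi_div \<alpha> P P = 0"
proof -
  have "renyi_term \<alpha> P P x = ennreal (pmf P x)" for x
    using pmf_nonneg[of P x] by (auto simp: renyi_term_def powr_add[symmetric])
  then show ?thesis
    by (simp add: renyi_div_eq nn_integral_pmf_eq_1 zero_ereal_def)
qed

lemma renyi_div_map_pmf_inj:
  assumes "inj f"
  shows "renyi_div \<alpha> (map_pmf f P) (map_pmf f Q) = renyi_div \<alpha> P Q"
proof -
  let ?h = "renyi_term \<alpha> (map_pmf f P) (map_pmf f Q)"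
  have outside: "?h y = 0" if "y \<notin> range f" for y
    using that by (simp add: renyi_term_def pmf_map_outside image_iff)
  have inside: "?h (f x) = renyi_term \<alpha> P Q x" for x
    unfolding renyi_term_def pmf_map_inj'[OF assms] ..
  have "(\<integral>\<^sup>+ y. ?h y \<partial>count_space UNIV) = (\<integral>\<^sup>+ y. ?h y * indicator (range f) y \<partial>count_space UNIV)"
    by (rule nn_integral_cong) (simp add: outside split: split_indicator)
  also have "\<dots> = (\<integral>\<^sup>+ x. ?h (f x) \<partial>count_space UNIV)"
    using nn_integral_count_compose_inj[of f UNIV ?h] assms by simp
  also have "\<dots> = (\<integral>\<^sup>+ x. renyi_term \<alpha> P Q x \<partial>count_space UNIV)"
    by (simp add: inside)
  finally show ?thesis
    by (simp add: renyi_div_eq)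
qed

definition mixture :: "real \<Rightarrow> 'a pmf \<Rightarrow> 'a pmf \<Rightarrow> 'a pmf \<Rightarrow> bool" where
  "mixture \<delta> P P' P'' \<longleftrightarrow> (\<forall>x. pmf P x = (1 - \<delta>) * pmf P' x + \<delta> * pmf P'' x)"

lemma approx_renyi_div_eq:
  "approx_renyi_div \<delta> \<alpha> P Q =
    Inf {renyi_div \<alpha> P' Q' | P' P'' Q' Q''. mixture \<delta> P P' P'' \<and> mixture \<delta> Q Q' Q''}"
  unfolding approx_renyi_div_def mixture_def ..

lemma approx_renyi_div_le_renyi_div:
  "mixture \<delta> P P' P'' \<Longrightarrow> mixture \<delta> Q Q' Q'' \<Longrightarrow> approx_renyi_div \<delta> \<alpha> P Q \<le> renyi_div \<alpha> P' Q'"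
  unfolding approx_renyi_div_eq by (rule Inf_lower) blast

lemma approx_renyi_div_lessE:
  assumes "approx_renyi_div \<delta> \<alpha> P Q < t"
  obtains P' P'' Q' Q'' where "mixture \<delta> P P' P''" "mixture \<delta> Q Q' Q''" "renyi_div \<alpha> P' Q' < t"
  using assms unfolding approx_renyi_div_eq Inf_less_iff by blast

lemma approx_renyi_div_common_component:
  "mixture \<delta> P R P'' \<Longrightarrow> mixture \<delta> Q R Q'' \<Longrightarrow> approx_renyi_div \<delta> \<alpha> P Q \<le> 0"
  using approx_renyi_div_le_renyi_div renyi_div_self by metis

lemma approx_renyi_div_self: "approx_renyi_div \<delta> \<alpha> P P \<le> 0"
  by (rule approx_renyi_div_common_component[where R = P and P'' = P and Q'' = P])
    (simp_all add: mixture_def algebra_simps)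

text \<open>A finite divergence forces the \<open>(1 - \<delta>)\<close>-component of \<open>P\<close> to vanish where that of \<open>Q\<close>
  does, so only the \<open>\<delta>\<close>-part of \<open>P\<close> lives outside the support of \<open>Q\<close>.\<close>
lemma approx_renyi_div_finite_imp_mass_le:
  assumes "approx_renyi_div \<delta> \<alpha> P Q < \<infinity>" "0 \<le> \<delta>" "\<delta> < 1" "finite B"
    and "\<forall>x\<in>B. pmf Q x = 0"
  shows "sum (pmf P) B \<le> \<delta>"
proof -
  obtain P' P'' Q' Q'' where P: "mixture \<delta> P P' P''" and Q: "mixture \<delta> Q Q' Q''"
    and finite: "renyi_div \<alpha> P' Q' < \<infinity>"
    using approx_renyi_div_lessE[OF assms(1)] .
  have "pmf P x = \<delta> * pmf P'' x" if "x \<in> B" for x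
  proof -
    have "(1 - \<delta>) * pmf Q' x + \<delta> * pmf Q'' x = 0"
      using Q assms(5) that by (simp add: mixture_def)
    then have "pmf Q' x = 0"
      using assms(2,3) by (simp add: add_nonneg_eq_0_iff)
    then have "pmf P' x = 0"
      using renyi_div_finite_imp_pmf_nonzero finite by fastforce
    then show ?thesis
      using P by (simp add: mixture_def)
  qed
  then have "sum (pmf P) B = \<delta> * sum (pmf P'') B"
    by (simp add: sum_distrib_left)
  also have "\<dots> \<le> \<delta>"
    using measure_measure_pmf_finite[OF assms(4), of P''] measure_pmf.prob_le_1 assms(2)
    by (metis mult_left_le)
  finally show ?thesis .
qed

lemma mixture_map_pmf:
  assumes "inj f" "mixture \<delta> P P' P''"
  shows "mixture \<delta> (map_pmf f P) (map_pmf f P') (map_pmf f P'')"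
  unfolding mixture_def
proof
  fix y
  show "pmf (map_pmf f P) y = (1 - \<delta>) * pmf (map_pmf f P') y + \<delta> * pmf (map_pmf f P'') y"
  proof (cases "y \<in> range f")
    case True
    then show ?thesis
      using assms by (auto simp: mixture_def pmf_map_inj')
  next
    case False
    then show ?thesis
      by (simp add: pmf_map_outside image_iff)
  qed
qed

lemma approx_renyi_div_map_pmf_inj_le:
  assumes "inj f"
  shows "approx_renyi_div \<delta> \<alpha> (map_pmf f P) (map_pmf f Q) \<le> approx_renyi_div \<delta> \<alpha> P Q"
  unfolding approx_renyi_div_eq[of _ _ P Q]
proof (rule Inf_greatest, clarify)
  fix P' P'' Q' Q'' assume "mixture \<delta> P P' P''" "mixture \<delta> Q Q' Q''"
  then have "approx_renyi_div \<delta> \<alpha> (map_pmf f P) (map_pmf f Q)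
      \<le> renyi_div \<alpha> (map_pmf f P') (map_pmf f Q')"
    using assms by (intro approx_renyi_div_le_renyi_div[where P'' = "map_pmf f P''" and Q'' = "map_pmf f Q''"]
        mixture_map_pmf)
  then show "approx_renyi_div \<delta> \<alpha> (map_pmf f P) (map_pmf f Q) \<le> renyi_div \<alpha> P' Q'"
    using renyi_div_map_pmf_inj[OF assms] by simp
qed

lemma bernoulli_pmf_True_eq:
  fixes P :: "bool pmf"
  shows "bernoulli_pmf (pmf P True) = P"
proof (rule pmf_eqI)
  have "(\<Sum>b\<in>UNIV. pmf P b) = 1"
    by (rule sum_pmf_eq_1) simp_all
  then have "pmf P True + pmf P False = 1"
    by (simp add: UNIV_bool add.commute)
  then show "pmf (bernoulli_pmf (pmf P True)) b = pmf P b" for b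
    by (cases b) (simp_all add: pmf_le_1)
qed

definition bern_abs_cont :: "real \<Rightarrow> real \<Rightarrow> bool" where
  "bern_abs_cont a b \<longleftrightarrow> (b = 0 \<longrightarrow> a = 0) \<and> (b = 1 \<longrightarrow> a = 1)"

definition bern_renyi_sum :: "real \<Rightarrow> real \<Rightarrow> real \<Rightarrow> real" where
  "bern_renyi_sum \<alpha> a b = a powr \<alpha> * b powr (1 - \<alpha>) + (1 - a) powr \<alpha> * (1 - b) powr (1 - \<alpha>)"

lemma renyi_div_bernoulli:
  assumes "a \<in> {0..1}" "b \<in> {0..1}"
  shows "renyi_div \<alpha> (bernoulli_pmf a) (bernoulli_pmf b) =
    (if bern_abs_cont a b then ereal (ln (bern_renyi_sum \<alpha> a b) / (\<alpha> - 1)) else \<infinity>)"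
proof -
  let ?g = "renyi_term \<alpha> (bernoulli_pmf a) (bernoulli_pmf b)"
  have integral: "(\<integral>\<^sup>+ x. ?g x \<partial>count_space UNIV) = ?g True + ?g False"
    by (simp add: nn_integral_count_space_finite UNIV_bool)
  show ?thesis
  proof (cases "bern_abs_cont a b")
    case True
    then have "?g True + ?g False = ennreal (bern_renyi_sum \<alpha> a b)"
      using assms by (auto simp: renyi_term_def bern_abs_cont_def bern_renyi_sum_def ennreal_plus)
    moreover have "bern_renyi_sum \<alpha> a b \<ge> 0"
      by (simp add: bern_renyi_sum_def)
    ultimately show ?thesis
      using True integral by (simp add: renyi_div_eq)
  next
    case False
    then have "?g True = \<infinity> \<or> ?g False = \<infinity>"
      using assms by (auto simp: renyi_term_def bern_abs_cont_def)
    then show ?thesis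
      using False integral by (auto simp: renyi_div_eq)
  qed
qed

lemma renyi_div_bernoulli_le_iff:
  assumes "\<alpha> > 1" "a \<in> {0..1}" "b \<in> {0..1}"
  shows "renyi_div \<alpha> (bernoulli_pmf a) (bernoulli_pmf b) \<le> ereal t \<longleftrightarrow>
    bern_abs_cont a b \<and> bern_renyi_sum \<alpha> a b \<le> exp ((\<alpha> - 1) * t)"
proof (cases "bern_abs_cont a b")
  case True
  have "bern_renyi_sum \<alpha> a b > 0"
  proof (cases "a = 0")
    case True
    then have "b \<noteq> 1"
      using \<open>bern_abs_cont a b\<close> by (auto simp: bern_abs_cont_def)
    then show ?thesis
      using True assms(3) by (simp add: bern_renyi_sum_def)
  next
    case False
    then have "b \<noteq> 0"
      using \<open>bern_abs_cont a b\<close> by (auto simp: bern_abs_cont_def)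
    then have "a powr \<alpha> * b powr (1 - \<alpha>) > 0"
      using False assms(2,3) by simp
    then show ?thesis
      using assms(2,3) by (simp add: bern_renyi_sum_def add_pos_nonneg)
  qed
  then have "ln (bern_renyi_sum \<alpha> a b) / (\<alpha> - 1) \<le> t \<longleftrightarrow> bern_renyi_sum \<alpha> a b \<le> exp ((\<alpha> - 1) * t)"
    using assms(1) by (simp add: divide_le_eq mult.commute ln_le_cancel_iff[symmetric])
  then show ?thesis
    using True renyi_div_bernoulli[OF assms(2,3)] by simp
qed (use renyi_div_bernoulli[OF assms(2,3)] in simp)

lemma compact_Int_chain_nonempty:
  fixes S :: "real \<Rightarrow> 'a :: heine_borel set"
  assumes "compact B" "\<And>\<eta>. closed (S \<eta>)" "\<And>\<eta> \<eta>'. \<eta> \<le> \<eta>' \<Longrightarrow> S \<eta> \<subseteq> S \<eta>'"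
    and "\<And>\<eta>. \<eta> > 0 \<Longrightarrow> B \<inter> S \<eta> \<noteq> {}"
  shows "B \<inter> (\<Inter>\<eta>\<in>{0<..}. S \<eta>) \<noteq> {}"
proof -
  let ?F = "(\<lambda>\<eta>. B \<inter> S \<eta>) ` {0<..}"
  have "\<Inter>?F \<noteq> {}"
  proof (rule compact_chain)
    show "compact T" if "T \<in> ?F" for T
      using that assms(1,2) by (auto intro: compact_Int_closed)
    show "{} \<notin> ?F"
      using assms(4) by force
    show "T \<subseteq> T' \<or> T' \<subseteq> T" if TT': "T \<in> ?F \<and> T' \<in> ?F" for T T'
    proof -
      obtain \<eta> \<eta>' where "T = B \<inter> S \<eta>" "T' = B \<inter> S \<eta>'"
        using TT' by blast
      then show ?thesis
        using assms(3)[of \<eta> \<eta>'] assms(3)[of \<eta>' \<eta>] by (cases "\<eta> \<le> \<eta>'") auto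
    qed
  qed
  moreover have "\<Inter>?F \<subseteq> B \<inter> (\<Inter>\<eta>\<in>{0<..}. S \<eta>)"
    by auto
  ultimately show ?thesis
    by blast
qed

lemma tendsto_powr_nonneg:
  fixes a :: "nat \<Rightarrow> real"
  assumes "a \<longlonglongrightarrow> a0" "\<And>n. 0 \<le> a n" "e > 0"
  shows "(\<lambda>n. a n powr e) \<longlonglongrightarrow> a0 powr e"
  using assms by (intro tendsto_powr' tendsto_const) (auto intro: always_eventually)

text \<open>Lower semicontinuity of \<open>(a, b) \<mapsto> a powr \<alpha> * b powr (1 - \<alpha>)\<close> along bounded sequences
  respecting \<open>b = 0 \<Longrightarrow> a = 0\<close>: at \<open>b0 = 0\<close> the bound forces \<open>a0 = 0\<close>, where the limit value is \<open>0\<close>.\<close>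
lemma powr_ratio_lower_limit:
  fixes a b :: "nat \<Rightarrow> real"
  assumes "\<alpha> > 1" "a \<longlonglongrightarrow> a0" "b \<longlonglongrightarrow> b0" "\<And>n. 0 \<le> a n" "\<And>n. 0 \<le> b n"
    and "\<And>n. b n = 0 \<Longrightarrow> a n = 0" "\<And>n. a n powr \<alpha> * b n powr (1 - \<alpha>) \<le> c"
  shows "(b0 = 0 \<longrightarrow> a0 = 0) \<and>
    (\<exists>f. f \<longlonglongrightarrow> a0 powr \<alpha> * b0 powr (1 - \<alpha>) \<and> (\<forall>n. f n \<le> a n powr \<alpha> * b n powr (1 - \<alpha>)))"
proof (cases "b0 = 0")
  case True
  have "0 \<le> c"
    using assms(7)[of 0] by (meson mult_nonneg_nonneg order_trans powr_ge_zero)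
  have bound: "a n powr \<alpha> \<le> c * b n powr (\<alpha> - 1)" for n
  proof (cases "b n = 0")
    case True
    then show ?thesis
      using assms(6) by simp
  next
    case False
    then have "b n > 0"
      using assms(5)[of n] by simp
    then have "a n powr \<alpha> = (a n powr \<alpha> * b n powr (1 - \<alpha>)) * b n powr (\<alpha> - 1)"
      by (simp add: mult.assoc powr_add[symmetric])
    also have "\<dots> \<le> c * b n powr (\<alpha> - 1)"
      by (rule mult_right_mono[OF assms(7)]) simp
    finally show ?thesis .
  qed
  have "(\<lambda>n. a n powr \<alpha>) \<longlonglongrightarrow> a0 powr \<alpha>"
    using assms(1) by (intro tendsto_powr_nonneg assms(2,4)) simp
  moreover have "(\<lambda>n. c * b n powr (\<alpha> - 1)) \<longlonglongrightarrow> c * b0 powr (\<alpha> - 1)"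
    using assms(1) by (intro tendsto_mult_left tendsto_powr_nonneg assms(3,5)) simp
  ultimately have "a0 powr \<alpha> \<le> c * b0 powr (\<alpha> - 1)"
    by (rule LIMSEQ_le) (use bound in auto)
  then have "a0 = 0"
    using True assms(1) tendsto_lowerbound[OF assms(2)] assms(4) by (simp add: always_eventually)
  then show ?thesis
    using True by (auto intro!: exI[of _ "\<lambda>_. 0"])
next
  case False
  have "(\<lambda>n. a n powr \<alpha> * b n powr (1 - \<alpha>)) \<longlonglongrightarrow> a0 powr \<alpha> * b0 powr (1 - \<alpha>)"
    using assms(1) False
    by (intro tendsto_mult tendsto_powr tendsto_const tendsto_powr_nonneg assms(2-4)) auto
  then show ?thesis
    using False by blast
qed

lemma bern_renyi_sum_limit_le:
  fixes a b :: "nat \<Rightarrow> real"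
  assumes "\<alpha> > 1" "a \<longlonglongrightarrow> a0" "b \<longlonglongrightarrow> b0" "\<And>n. a n \<in> {0..1}" "\<And>n. b n \<in> {0..1}"
    and "\<And>n. bern_abs_cont (a n) (b n)" "\<And>n. bern_renyi_sum \<alpha> (a n) (b n) \<le> c"
  shows "bern_abs_cont a0 b0 \<and> bern_renyi_sum \<alpha> a0 b0 \<le> c"
proof -
  have terms: "a n powr \<alpha> * b n powr (1 - \<alpha>) \<le> c"
      "(1 - a n) powr \<alpha> * (1 - b n) powr (1 - \<alpha>) \<le> c" for n
    using assms(7)[of n] unfolding bern_renyi_sum_def
    by (smt (verit) mult_nonneg_nonneg powr_ge_zero)+
  obtain f where f: "b0 = 0 \<longrightarrow> a0 = 0" "f \<longlonglongrightarrow> a0 powr \<alpha> * b0 powr (1 - \<alpha>)"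
      "\<And>n. f n \<le> a n powr \<alpha> * b n powr (1 - \<alpha>)"
    using powr_ratio_lower_limit[OF assms(1-3) _ _ _ terms(1)] assms(4-6)
    by (auto simp: bern_abs_cont_def)
  obtain g where g: "1 - b0 = 0 \<longrightarrow> 1 - a0 = 0" "g \<longlonglongrightarrow> (1 - a0) powr \<alpha> * (1 - b0) powr (1 - \<alpha>)"
      "\<And>n. g n \<le> (1 - a n) powr \<alpha> * (1 - b n) powr (1 - \<alpha>)"
    using powr_ratio_lower_limit[OF assms(1) tendsto_diff[OF tendsto_const assms(2)]
        tendsto_diff[OF tendsto_const assms(3)] _ _ _ terms(2)] assms(4-6)
    by (auto simp: bern_abs_cont_def)
  have "bern_renyi_sum \<alpha> a0 b0 \<le> c"
    unfolding bern_renyi_sum_def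
  proof (rule tendsto_le[OF trivial_limit_sequentially tendsto_const tendsto_add[OF f(2) g(2)]])
    have "f n + g n \<le> c" for n
      using f(3)[of n] g(3)[of n] assms(7)[of n] unfolding bern_renyi_sum_def by linarith
    then show "\<forall>\<^sub>F n in sequentially. f n + g n \<le> c"
      by (simp add: always_eventually)
  qed
  moreover have "bern_abs_cont a0 b0"
    using f(1) g(1) by (simp add: bern_abs_cont_def)
  ultimately show ?thesis
    by simp
qed

definition bern_sublevel :: "real \<Rightarrow> real \<Rightarrow> (real \<times> real) set" where
  "bern_sublevel \<alpha> t = {(a, b). a \<in> {0..1} \<and> b \<in> {0..1} \<and>
     renyi_div \<alpha> (bernoulli_pmf a) (bernoulli_pmf b) \<le> ereal t}"

lemma closed_bern_sublevel:
  assumes "\<alpha> > 1"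
  shows "closed (bern_sublevel \<alpha> t)"
  unfolding closed_sequential_limits
proof (intro allI impI, elim conjE)
  fix z l assume mem: "\<forall>n. z n \<in> bern_sublevel \<alpha> t" and lim: "z \<longlonglongrightarrow> l"
  define a b where "a = (\<lambda>n. fst (z n))" and "b = (\<lambda>n. snd (z n))"
  obtain a0 b0 where l: "l = (a0, b0)"
    by fastforce
  have la: "a \<longlonglongrightarrow> a0" and lb: "b \<longlonglongrightarrow> b0"
    using tendsto_fst[OF lim] tendsto_snd[OF lim] by (simp_all add: a_def b_def l)
  have mem': "(a n, b n) \<in> bern_sublevel \<alpha> t" for n
    using mem by (simp add: a_def b_def)
  have ab: "a n \<in> {0..1}" "b n \<in> {0..1}" for n
    using mem'[of n] by (simp_all add: bern_sublevel_def)
  have ab0: "a0 \<in> {0..1}" "b0 \<in> {0..1}"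
    using Lim_in_closed_set[OF closed_atLeastAtMost always_eventually[OF allI[OF ab(1)]] _ la]
      Lim_in_closed_set[OF closed_atLeastAtMost always_eventually[OF allI[OF ab(2)]] _ lb]
    by simp_all
  have "bern_abs_cont (a n) (b n) \<and> bern_renyi_sum \<alpha> (a n) (b n) \<le> exp ((\<alpha> - 1) * t)" for n
    using mem'[of n] renyi_div_bernoulli_le_iff[OF assms ab[of n]] by (simp add: bern_sublevel_def)
  then have "bern_abs_cont a0 b0 \<and> bern_renyi_sum \<alpha> a0 b0 \<le> exp ((\<alpha> - 1) * t)"
    using bern_renyi_sum_limit_le[OF assms la lb ab] by blast
  then show "l \<in> bern_sublevel \<alpha> t"
    using renyi_div_bernoulli_le_iff[OF assms ab0] ab0 by (simp add: bern_sublevel_def l)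
qed

definition component_lo :: "real \<Rightarrow> real \<Rightarrow> real" where
  "component_lo \<delta> p = max 0 ((p - \<delta>) / (1 - \<delta>))"

definition component_hi :: "real \<Rightarrow> real \<Rightarrow> real" where
  "component_hi \<delta> p = min 1 (p / (1 - \<delta>))"

lemma mixture_bernoulli_component_bounds:
  assumes "0 \<le> \<delta>" "\<delta> < 1" "p \<in> {0..1}" "mixture \<delta> (bernoulli_pmf p) P' P''"
  shows "pmf P' True \<in> {component_lo \<delta> p..component_hi \<delta> p}"
proof -
  define a c where "a = pmf P' True" and "c = pmf P'' True"
  have p: "p = (1 - \<delta>) * a + \<delta> * c"
    using assms(3) assms(4)[unfolded mixture_def, rule_format, of True] by (simp add: a_def c_def)
  have "0 \<le> a" "a \<le> 1" "0 \<le> \<delta> * c" "\<delta> * c \<le> \<delta>"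
    using assms(1) by (simp_all add: a_def c_def pmf_le_1 mult_left_le)
  then show ?thesis
    using assms(2) unfolding a_def[symmetric] p
    by (simp add: component_lo_def component_hi_def divide_le_eq le_divide_eq algebra_simps)
qed

lemma mixture_bernoulli_component_exists:
  assumes "0 < \<delta>" "\<delta> < 1" "p \<in> {0..1}" "a \<in> {component_lo \<delta> p..component_hi \<delta> p}"
  shows "\<exists>c. mixture \<delta> (bernoulli_pmf p) (bernoulli_pmf a) (bernoulli_pmf c)"
proof
  define c where "c = (p - (1 - \<delta>) * a) / \<delta>"
  have a: "0 \<le> a" "a \<le> 1" "p - \<delta> \<le> (1 - \<delta>) * a" "(1 - \<delta>) * a \<le> p"
    using assms(2,4) by (simp_all add: component_lo_def component_hi_def divide_le_eq le_divide_eq mult.commute)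
  have "0 \<le> c" "c \<le> 1" "\<delta> * c = p - (1 - \<delta>) * a"
    using a assms(1) by (simp_all add: c_def divide_le_eq)
  then show "mixture \<delta> (bernoulli_pmf p) (bernoulli_pmf a) (bernoulli_pmf c)"
    using a assms(3) unfolding mixture_def
    by (intro allI, case_tac x) (simp_all add: algebra_simps)
qed

lemma bern_sublevel_mono: "s \<le> t \<Longrightarrow> bern_sublevel \<alpha> s \<subseteq> bern_sublevel \<alpha> t"
  by (auto simp: bern_sublevel_def intro: order_trans)

lemma bern_sublevel_Inter: "(\<Inter>\<eta>\<in>{0<..}. bern_sublevel \<alpha> (t + \<eta>)) = bern_sublevel \<alpha> t"
proof (intro equalityI subsetI)
  fix z assume z: "z \<in> (\<Inter>\<eta>\<in>{0<..}. bern_sublevel \<alpha> (t + \<eta>))"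
  obtain a b where ab: "z = (a, b)"
    by fastforce
  have near: "(a, b) \<in> bern_sublevel \<alpha> (t + \<eta>)" if "\<eta> > 0" for \<eta>
    using z that by (auto simp: ab)
  have "renyi_div \<alpha> (bernoulli_pmf a) (bernoulli_pmf b) \<le> ereal t"
    by (rule ereal_le_epsilon2) (use near in \<open>simp add: bern_sublevel_def\<close>)
  then show "z \<in> bern_sublevel \<alpha> t"
    using near[of 1] by (simp add: ab bern_sublevel_def)
next
  fix z assume z: "z \<in> bern_sublevel \<alpha> t"
  have "bern_sublevel \<alpha> t \<subseteq> bern_sublevel \<alpha> (t + \<eta>)" if "\<eta> > 0" for \<eta>
    using that by (intro bern_sublevel_mono) simp
  then show "z \<in> (\<Inter>\<eta>\<in>{0<..}. bern_sublevel \<alpha> (t + \<eta>))"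
    using z by blast
qed

text \<open>The infimum is attained: the admissible component pairs within \<open>t + \<eta>\<close> of it form a
  chain of nonempty compact sets.\<close>
lemma approx_renyi_div_bernoulli_le_iff:
  assumes "\<alpha> > 1" "0 < \<delta>" "\<delta> < 1" "p \<in> {0..1}" "q \<in> {0..1}"
  shows "approx_renyi_div \<delta> \<alpha> (bernoulli_pmf p) (bernoulli_pmf q) \<le> ereal t \<longleftrightarrow>
    ({component_lo \<delta> p..component_hi \<delta> p} \<times> {component_lo \<delta> q..component_hi \<delta> q})
      \<inter> bern_sublevel \<alpha> t \<noteq> {}"
    (is "_ \<longleftrightarrow> ?B \<inter> _ \<noteq> {}")
proof
  assume le: "approx_renyi_div \<delta> \<alpha> (bernoulli_pmf p) (bernoulli_pmf q) \<le> ereal t"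
  have witness: "?B \<inter> bern_sublevel \<alpha> (t + \<eta>) \<noteq> {}" if "\<eta> > 0" for \<eta>
  proof -
    have "approx_renyi_div \<delta> \<alpha> (bernoulli_pmf p) (bernoulli_pmf q) < ereal (t + \<eta>)"
      using le that by (simp add: le_less_trans)
    then obtain P' P'' Q' Q'' where P: "mixture \<delta> (bernoulli_pmf p) P' P''"
      and Q: "mixture \<delta> (bernoulli_pmf q) Q' Q''" and less: "renyi_div \<alpha> P' Q' < ereal (t + \<eta>)"
      by (rule approx_renyi_div_lessE)
    have "(pmf P' True, pmf Q' True) \<in> ?B"
      using mixture_bernoulli_component_bounds assms P Q by simp
    moreover have "(pmf P' True, pmf Q' True) \<in> bern_sublevel \<alpha> (t + \<eta>)"
      using less by (simp add: bern_sublevel_def bernoulli_pmf_True_eq pmf_le_1)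
    ultimately show ?thesis
      by blast
  qed
  then have "?B \<inter> (\<Inter>\<eta>\<in>{0<..}. bern_sublevel \<alpha> (t + \<eta>)) \<noteq> {}"
    using closed_bern_sublevel[OF assms(1)] bern_sublevel_mono
    by (intro compact_Int_chain_nonempty compact_Times compact_Icc) auto
  then show "?B \<inter> bern_sublevel \<alpha> t \<noteq> {}"
    by (simp add: bern_sublevel_Inter)
next
  assume "?B \<inter> bern_sublevel \<alpha> t \<noteq> {}"
  then obtain a b where ab: "(a, b) \<in> ?B" and sub: "(a, b) \<in> bern_sublevel \<alpha> t"
    by (metis IntE equals0I surj_pair)
  obtain c d where "mixture \<delta> (bernoulli_pmf p) (bernoulli_pmf a) (bernoulli_pmf c)"
    and "mixture \<delta> (bernoulli_pmf q) (bernoulli_pmf b) (bernoulli_pmf d)"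
    using mixture_bernoulli_component_exists assms ab by (metis mem_Times_iff fst_conv snd_conv)
  then have "approx_renyi_div \<delta> \<alpha> (bernoulli_pmf p) (bernoulli_pmf q)
      \<le> renyi_div \<alpha> (bernoulli_pmf a) (bernoulli_pmf b)"
    by (rule approx_renyi_div_le_renyi_div)
  also have "\<dots> \<le> ereal t"
    using sub by (simp add: bern_sublevel_def)
  finally show "approx_renyi_div \<delta> \<alpha> (bernoulli_pmf p) (bernoulli_pmf q) \<le> ereal t" .
qed

definition bern_close :: "real \<Rightarrow> real \<Rightarrow> real \<Rightarrow> real \<Rightarrow> real \<Rightarrow> bool" where
  "bern_close \<delta> \<alpha> \<epsilon> p q \<longleftrightarrow>
     approx_renyi_div \<delta> \<alpha> (bernoulli_pmf p) (bernoulli_pmf q) \<le> ereal \<epsilon> \<and>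
     approx_renyi_div \<delta> \<alpha> (bernoulli_pmf q) (bernoulli_pmf p) \<le> ereal \<epsilon>"

lemma bern_close_sym: "bern_close \<delta> \<alpha> \<epsilon> p q \<Longrightarrow> bern_close \<delta> \<alpha> \<epsilon> q p"
  by (simp add: bern_close_def)

lemma bern_close_refl: "0 \<le> \<epsilon> \<Longrightarrow> bern_close \<delta> \<alpha> \<epsilon> p p"
  using approx_renyi_div_self[of \<delta> \<alpha> "bernoulli_pmf p"] by (simp add: bern_close_def order_trans)

lemma bern_close_delta_zero:
  assumes "0 \<le> \<delta>" "\<delta> \<le> 1" "0 \<le> \<epsilon>"
  shows "bern_close \<delta> \<alpha> \<epsilon> \<delta> 0"
proof -
  have "mixture \<delta> (bernoulli_pmf \<delta>) (bernoulli_pmf 0) (bernoulli_pmf 1)"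
    using assms unfolding mixture_def by (intro allI, case_tac x) simp_all
  moreover have "mixture \<delta> (bernoulli_pmf 0) (bernoulli_pmf 0) (bernoulli_pmf 0)"
    by (simp add: mixture_def algebra_simps)
  ultimately show ?thesis
    using approx_renyi_div_common_component assms(3) unfolding bern_close_def
    by (metis order_trans zero_ereal_def ereal_less_eq(3))
qed

lemma L_fun_eq: "L_fun \<delta> \<alpha> \<epsilon> q = (GREATEST p. q \<le> p \<and> p \<le> 1 \<and> bern_close \<delta> \<alpha> \<epsilon> p q)"
  unfolding L_fun_def bern_close_def ..

lemma L_fun_zero:
  assumes "0 < \<delta>" "\<delta> < 1" "0 \<le> \<epsilon>"
  shows "L_fun \<delta> \<alpha> \<epsilon> 0 = \<delta>"
  unfolding L_fun_eq
proof (rule Greatest_equality)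
  show "0 \<le> \<delta> \<and> \<delta> \<le> 1 \<and> bern_close \<delta> \<alpha> \<epsilon> \<delta> 0"
    using bern_close_delta_zero assms by simp
next
  fix p assume p: "0 \<le> p \<and> p \<le> 1 \<and> bern_close \<delta> \<alpha> \<epsilon> p 0"
  then have "approx_renyi_div \<delta> \<alpha> (bernoulli_pmf p) (bernoulli_pmf 0) < \<infinity>"
    by (auto simp: bern_close_def intro: le_less_trans)
  then have "sum (pmf (bernoulli_pmf p)) {True} \<le> \<delta>"
    by (rule approx_renyi_div_finite_imp_mass_le) (use assms in simp_all)
  then show "p \<le> \<delta>"
    using p by simp
qed

lemma compact_component_projection:
  assumes "closed S" "\<delta> < 1"
  shows "compact {p \<in> {0..1}.
    ({component_lo \<delta> p..component_hi \<delta> p} \<times> {component_lo \<delta> q..component_hi \<delta> q}) \<inter> S \<noteq> {}}"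
    (is "compact ?P")
proof -
  define T where "T = {z :: real \<times> real \<times> real. 0 \<le> fst z \<and> fst z \<le> 1 \<and>
    component_lo \<delta> (fst z) \<le> fst (snd z) \<and> fst (snd z) \<le> component_hi \<delta> (fst z) \<and>
    component_lo \<delta> q \<le> snd (snd z) \<and> snd (snd z) \<le> component_hi \<delta> q \<and> snd z \<in> S}"
  have cont: "continuous_on UNIV (\<lambda>z :: real \<times> real \<times> real. component_lo \<delta> (fst z))"
    "continuous_on UNIV (\<lambda>z :: real \<times> real \<times> real. component_hi \<delta> (fst z))"
    using assms(2) unfolding component_lo_def component_hi_def by (intro continuous_intros, simp)+
  have closed_S: "closed {z :: real \<times> real \<times> real. snd z \<in> S}"
    using closed_vimage_snd[OF assms(1)] by (simp add: vimage_def)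
  have "closed T"
    unfolding T_def by (intro closed_Collect_conj closed_Collect_le cont closed_S continuous_intros)
  moreover have "T = ({0..1} \<times> {0..1} \<times> {0..1}) \<inter> T"
    by (auto simp: T_def component_lo_def component_hi_def)
  ultimately have "compact T"
    by (metis compact_Int_closed compact_Icc compact_Times)
  moreover have "?P = fst ` T"
  proof (intro equalityI subsetI)
    fix p assume "p \<in> ?P"
    then obtain z where "p \<in> {0..1}"
      "z \<in> ({component_lo \<delta> p..component_hi \<delta> p} \<times> {component_lo \<delta> q..component_hi \<delta> q}) \<inter> S"
      by blast
    then have "(p, z) \<in> T"
      by (cases z) (simp add: T_def)
    then show "p \<in> fst ` T"
      by (metis fst_conv image_eqI)
  next
    fix p assume "p \<in> fst ` T"
    then obtain z where z: "z \<in> T" "p = fst z"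
      by blast
    then have "snd z \<in> ({component_lo \<delta> p..component_hi \<delta> p} \<times> {component_lo \<delta> q..component_hi \<delta> q}) \<inter> S"
      by (auto simp: T_def mem_Times_iff)
    then show "p \<in> ?P"
      using z by (auto simp: T_def)
  qed
  ultimately show ?thesis
    using compact_continuous_image[OF continuous_on_fst[OF continuous_on_id]] by simp
qed

lemma compact_L_fun_candidates:
  assumes "\<alpha> > 1" "0 < \<delta>" "\<delta> < 1" "q \<in> {0..1}"
  shows "compact {p. q \<le> p \<and> p \<le> 1 \<and> bern_close \<delta> \<alpha> \<epsilon> p q}"
proof -
  let ?R = "\<lambda>p. {component_lo \<delta> p..component_hi \<delta> p}"
  let ?C = "\<lambda>S. {p \<in> {0..1}. (?R p \<times> ?R q) \<inter> S \<noteq> {}}"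
  have closed: "closed (bern_sublevel \<alpha> \<epsilon>)" "closed (prod.swap -` bern_sublevel \<alpha> \<epsilon>)"
    using closed_bern_sublevel[OF assms(1)] by (auto intro: closed_vimage continuous_intros)
  have swap: "(B \<times> A) \<inter> S \<noteq> {} \<longleftrightarrow> (A \<times> B) \<inter> prod.swap -` S \<noteq> {}"
    for A B :: "real set" and S :: "(real \<times> real) set"
    by (auto simp: disjoint_iff)
  have "bern_close \<delta> \<alpha> \<epsilon> p q \<longleftrightarrow> p \<in> ?C (bern_sublevel \<alpha> \<epsilon>) \<and> p \<in> ?C (prod.swap -` bern_sublevel \<alpha> \<epsilon>)"
    if "p \<in> {0..1}" for p
    using that assms(4) approx_renyi_div_bernoulli_le_iff[OF assms(1-3)] swap by (simp add: bern_close_def)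
  then have "{p. q \<le> p \<and> p \<le> 1 \<and> bern_close \<delta> \<alpha> \<epsilon> p q} =
      ?C (bern_sublevel \<alpha> \<epsilon>) \<inter> ?C (prod.swap -` bern_sublevel \<alpha> \<epsilon>) \<inter> {q..1}"
    using assms(4) by auto
  then show ?thesis
    using compact_component_projection[OF closed(1) assms(3)] compact_component_projection[OF closed(2) assms(3)]
    by (simp add: compact_Int_closed compact_imp_closed)
qed

lemma L_fun_greatest:
  assumes "\<alpha> > 1" "0 < \<delta>" "\<delta> < 1" "0 \<le> \<epsilon>" "q \<in> {0..1}"
  shows "q \<le> L_fun \<delta> \<alpha> \<epsilon> q \<and> L_fun \<delta> \<alpha> \<epsilon> q \<le> 1 \<and> bern_close \<delta> \<alpha> \<epsilon> (L_fun \<delta> \<alpha> \<epsilon> q) q"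
proof -
  let ?A = "{p. q \<le> p \<and> p \<le> 1 \<and> bern_close \<delta> \<alpha> \<epsilon> p q}"
  have "q \<in> ?A"
    using assms(4,5) bern_close_refl by simp
  then obtain s where s: "s \<in> ?A" "\<And>p. p \<in> ?A \<Longrightarrow> p \<le> s"
    using compact_attains_sup[OF compact_L_fun_candidates[OF assms(1-3,5)]] by blast
  then have "L_fun \<delta> \<alpha> \<epsilon> q = s"
    unfolding L_fun_eq by (intro Greatest_equality) auto
  then show ?thesis
    using s(1) by simp
qed

definition bern_mech :: "'u set \<Rightarrow> (('u \<Rightarrow> nat) \<Rightarrow> real) \<Rightarrow> ('u \<Rightarrow> nat) \<Rightarrow> 'u set pmf" where
  "bern_mech S r X = map_pmf (\<lambda>b. if b then S else {}) (bernoulli_pmf (r X))"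

lemma is_rdp_bern_mech:
  assumes "S \<noteq> {}"
    and "\<And>X X'. dataset U X \<Longrightarrow> dataset U X' \<Longrightarrow> l1_neighbors U \<Delta> X X' \<Longrightarrow>
      bern_close \<delta> \<alpha> \<epsilon> (r X) (r X')"
  shows "is_rdp U \<Delta> \<delta> \<alpha> \<epsilon> (bern_mech S r)"
proof -
  have "inj (\<lambda>b. if b then S else {})"
    using assms(1) by (simp add: inj_def)
  then show ?thesis
    using assms(2) approx_renyi_div_map_pmf_inj_le order_trans
    unfolding is_rdp_def bern_mech_def bern_close_def by meson
qed

lemma partition_selection_bern_mech:
  assumes "\<And>X. dataset U X \<Longrightarrow> r X \<in> {0..1}"
    and "\<And>X. dataset U X \<Longrightarrow> r X \<noteq> 0 \<Longrightarrow> S \<subseteq> {u \<in> U. 0 < X u}"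
  shows "partition_selection U (bern_mech S r)"
  unfolding partition_selection_def bern_mech_def
proof (intro allI impI ballI)
  fix X T assume X: "dataset U X" and "T \<in> set_pmf (map_pmf (\<lambda>b. if b then S else {}) (bernoulli_pmf (r X)))"
  then obtain b where "b \<in> set_pmf (bernoulli_pmf (r X))" and T: "T = (if b then S else {})"
    by auto
  then have "b \<longrightarrow> r X \<noteq> 0"
    using assms(1)[OF X] by (auto simp: set_pmf_eq)
  then show "T \<subseteq> {u \<in> U. 0 < X u}"
    using assms(2)[OF X] T by auto
qed

lemma expected_size_bern_mech:
  "r X \<in> {0..1} \<Longrightarrow> expected_size (bern_mech S r X) = r X * card S"
  by (simp add: expected_size_def bern_mech_def)

lemma l1_neighbors_coordinate:
  assumes "finite U" "u \<in> U" "l1_neighbors U \<Delta> X X'"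
  shows "\<bar>int (X u) - int (X' u)\<bar> \<le> int \<Delta>"
  using member_le_sum[OF assms(2) _ assms(1), of "\<lambda>u. \<bar>int (X u) - int (X' u)\<bar>"] assms(3)
  unfolding l1_neighbors_def by simp

definition level_both :: "real \<Rightarrow> (nat \<Rightarrow> nat) \<Rightarrow> real" where
  "level_both \<delta> X = (if 0 < X 1 \<and> 0 < X 2 then \<delta> else 0)"

definition level_first :: "real \<Rightarrow> real \<Rightarrow> (nat \<Rightarrow> nat) \<Rightarrow> real" where
  "level_first \<delta> p X = (if 3 \<le> X 1 then p else if 1 \<le> X 1 then \<delta> else 0)"

lemma release_both_admissible:
  assumes "0 \<le> \<delta>" "\<delta> \<le> 1" "0 \<le> \<epsilon>"
  shows "partition_selection {1, 2} (bern_mech {1, 2} (level_both \<delta>)) \<and>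
    is_rdp {1, 2} 2 \<delta> \<alpha> \<epsilon> (bern_mech {1, 2} (level_both \<delta>))"
proof
  show "partition_selection {1, 2} (bern_mech {1, 2} (level_both \<delta>))"
    using assms by (intro partition_selection_bern_mech) (auto simp: level_both_def split: if_splits)
  have "bern_close \<delta> \<alpha> \<epsilon> (level_both \<delta> X) (level_both \<delta> X')" for X X'
    using bern_close_delta_zero[OF assms] bern_close_sym bern_close_refl[OF assms(3)]
    by (simp add: level_both_def)
  then show "is_rdp {1, 2} 2 \<delta> \<alpha> \<epsilon> (bern_mech {1, 2} (level_both \<delta>))"
    by (intro is_rdp_bern_mech) simp_all
qed

text \<open>A change of at most 2 in the first count moves \<open>level_first\<close> by at most one step of
  \<open>0, \<delta>, p\<close>, and consecutive steps are close.\<close>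
lemma release_first_admissible:
  assumes "0 \<le> \<delta>" "\<delta> \<le> p" "p \<le> 1" "0 \<le> \<epsilon>" "bern_close \<delta> \<alpha> \<epsilon> p \<delta>"
  shows "partition_selection {1, 2} (bern_mech {1} (level_first \<delta> p)) \<and>
    is_rdp {1, 2} 2 \<delta> \<alpha> \<epsilon> (bern_mech {1} (level_first \<delta> p))"
proof
  show "partition_selection {1, 2} (bern_mech {1} (level_first \<delta> p))"
    using assms by (intro partition_selection_bern_mech) (auto simp: level_first_def split: if_splits)
  have "bern_close \<delta> \<alpha> \<epsilon> (level_first \<delta> p X) (level_first \<delta> p X')"
    if "l1_neighbors {1, 2} 2 X X'" for X X'
  proof -
    have "\<bar>int (X 1) - int (X' 1)\<bar> \<le> 2"
      using l1_neighbors_coordinate[OF _ _ that] by simp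
    then show ?thesis
      using assms bern_close_delta_zero[of \<delta> \<epsilon> \<alpha>] bern_close_sym bern_close_refl[OF assms(4)]
      by (auto simp: level_first_def)
  qed
  then show "is_rdp {1, 2} 2 \<delta> \<alpha> \<epsilon> (bern_mech {1} (level_first \<delta> p))"
    by (intro is_rdp_bern_mech) simp_all
qed

lemma partition_selection_pmf_eq_0:
  assumes "partition_selection U M" "dataset U X" "\<not> S \<subseteq> {u \<in> U. 0 < X u}"
  shows "pmf (M X) S = 0"
  using assms unfolding partition_selection_def by (meson set_pmf_iff)

lemma is_rdp_mass_le:
  assumes "is_rdp U \<Delta> \<delta> \<alpha> \<epsilon> M" "dataset U X" "dataset U X'" "l1_neighbors U \<Delta> X X'"
    and "0 \<le> \<delta>" "\<delta> < 1" "finite B" "\<forall>S\<in>B. pmf (M X') S = 0"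
  shows "sum (pmf (M X)) B \<le> \<delta>"
proof (rule approx_renyi_div_finite_imp_mass_le[OF _ assms(5-8)])
  have "approx_renyi_div \<delta> \<alpha> (M X) (M X') \<le> ereal \<epsilon>"
    using assms(1-4) unfolding is_rdp_def by blast
  then show "approx_renyi_div \<delta> \<alpha> (M X) (M X') < \<infinity>"
    using le_less_trans by fastforce
qed

definition pair_data :: "nat \<Rightarrow> nat \<Rightarrow> nat \<Rightarrow> nat" where
  "pair_data a b = (\<lambda>u. if u = 1 then a else if u = 2 then b else 0)"

lemma dataset_pair_data: "dataset {1, 2} (pair_data a b)"
  by (simp add: dataset_def pair_data_def)

lemma expected_size_partition_selection_12:
  fixes M :: "(nat \<Rightarrow> nat) \<Rightarrow> nat set pmf"
  assumes "partition_selection {1, 2} M" "dataset {1, 2} X"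
  shows "expected_size (M X) = pmf (M X) {1} + pmf (M X) {2} + 2 * pmf (M X) {1, 2}"
proof -
  have "expected_size (M X) = (\<Sum>S\<in>{{1}, {2}, {1, 2 :: nat}}. real (card S) * pmf (M X) S)"
    unfolding expected_size_def
  proof (rule integral_measure_pmf_real)
    fix S assume "S \<in> set_pmf (M X)" "real (card S) \<noteq> 0"
    then have "S \<in> Pow {1, 2}" "S \<noteq> {}"
      using assms unfolding partition_selection_def by auto
    moreover have "Pow {1, 2 :: nat} = {{}, {1}, {2}, {1, 2}}"
      by (simp add: Pow_insert insert_commute)
    ultimately show "S \<in> {{1}, {2}, {1, 2}}"
      by blast
  qed simp
  then show ?thesis
    by simp
qed

lemma singleton_mass_zero_at_11:
  assumes "partition_selection {1, 2} M" "is_rdp {1, 2} 2 \<delta> \<alpha> \<epsilon> M" "0 \<le> \<delta>" "\<delta> < 1"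
    and "2 * \<delta> \<le> expected_size (M (pair_data 1 1))"
  shows "pmf (M (pair_data 1 1)) {1} = 0"
proof -
  let ?D = "M (pair_data 1 1)"
  have neighbours: "l1_neighbors {1, 2} 2 (pair_data 1 1) (pair_data 0 0)"
    by (simp add: l1_neighbors_def pair_data_def)
  have empty: "\<forall>S\<in>{{1}, {2}, {1, 2}}. pmf (M (pair_data 0 0)) S = 0"
    using partition_selection_pmf_eq_0[OF assms(1) dataset_pair_data] by (simp add: pair_data_def)
  have "pmf ?D {1} + pmf ?D {2} + pmf ?D {1, 2} = sum (pmf ?D) {{1}, {2}, {1, 2}}"
    by simp
  also have "\<dots> \<le> \<delta>"
    by (rule is_rdp_mass_le[OF assms(2) dataset_pair_data dataset_pair_data neighbours assms(3,4)])
      (use empty in simp_all)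
  finally have "pmf ?D {1} + pmf ?D {2} + pmf ?D {1, 2} \<le> \<delta>" .
  moreover have "expected_size ?D = pmf ?D {1} + pmf ?D {2} + 2 * pmf ?D {1, 2}"
    by (rule expected_size_partition_selection_12[OF assms(1) dataset_pair_data])
  ultimately show ?thesis
    using assms(5) pmf_nonneg[of ?D "{1}"] pmf_nonneg[of ?D "{2}"] by linarith
qed

lemma expected_size_at_31_le:
  assumes "partition_selection {1, 2} M" "is_rdp {1, 2} 2 \<delta> \<alpha> \<epsilon> M" "0 \<le> \<delta>" "\<delta> < 1"
    and "pmf (M (pair_data 1 1)) {1} = 0"
  shows "expected_size (M (pair_data 3 1)) \<le> 3 * \<delta>"
proof -
  let ?D = "M (pair_data 3 1)"
  have neighbours: "l1_neighbors {1, 2} 2 (pair_data 3 1) (pair_data 1 1)"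
    "l1_neighbors {1, 2} 2 (pair_data 3 1) (pair_data 3 0)"
    by (simp_all add: l1_neighbors_def pair_data_def)
  have empty: "\<forall>S\<in>{{1}}. pmf (M (pair_data 1 1)) S = 0"
    "\<forall>S\<in>{{2}, {1, 2}}. pmf (M (pair_data 3 0)) S = 0"
    using assms(5) partition_selection_pmf_eq_0[OF assms(1) dataset_pair_data] by (simp_all add: pair_data_def)
  have "pmf ?D {1} = sum (pmf ?D) {{1}}"
    by simp
  also have "\<dots> \<le> \<delta>"
    by (rule is_rdp_mass_le[OF assms(2) dataset_pair_data dataset_pair_data neighbours(1) assms(3,4)])
      (use empty(1) in simp_all)
  finally have "pmf ?D {1} \<le> \<delta>" .
  have "pmf ?D {2} + pmf ?D {1, 2} = sum (pmf ?D) {{2}, {1, 2}}"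
    by simp
  also have "\<dots> \<le> \<delta>"
    by (rule is_rdp_mass_le[OF assms(2) dataset_pair_data dataset_pair_data neighbours(2) assms(3,4)])
      (use empty(2) in simp_all)
  finally have "pmf ?D {2} + pmf ?D {1, 2} \<le> \<delta>" .
  moreover have "expected_size ?D = pmf ?D {1} + pmf ?D {2} + 2 * pmf ?D {1, 2}"
    by (rule expected_size_partition_selection_12[OF assms(1) dataset_pair_data])
  ultimately show ?thesis
    using \<open>pmf ?D {1} \<le> \<delta>\<close> pmf_nonneg[of ?D "{2}"] by linarith
qed

theorem mainTheorem4:
  fixes \<alpha> \<epsilon> \<delta> :: real
  assumes "\<alpha> > 1" and "\<epsilon> > 0" and "0 < \<delta>" and "\<delta> < 1"
    and "pi_star \<delta> \<alpha> \<epsilon> 2 > 3 * pi_star \<delta> \<alpha> \<epsilon> 1"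
  shows "\<not> (\<exists>Mstar :: (nat \<Rightarrow> nat) \<Rightarrow> nat set pmf.
            partition_selection {1, 2} Mstar \<and> is_rdp {1, 2} 2 \<delta> \<alpha> \<epsilon> Mstar \<and>
            (\<forall>M :: (nat \<Rightarrow> nat) \<Rightarrow> nat set pmf.
               partition_selection {1, 2} M \<and> is_rdp {1, 2} 2 \<delta> \<alpha> \<epsilon> M \<longrightarrow>
               (\<forall>X. dataset {1, 2} X \<longrightarrow> expected_size (Mstar X) \<ge> expected_size (M X))))"
proof
  assume "\<exists>Mstar :: (nat \<Rightarrow> nat) \<Rightarrow> nat set pmf.
            partition_selection {1, 2} Mstar \<and> is_rdp {1, 2} 2 \<delta> \<alpha> \<epsilon> Mstar \<and>
            (\<forall>M :: (nat \<Rightarrow> nat) \<Rightarrow> nat set pmf.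
               partition_selection {1, 2} M \<and> is_rdp {1, 2} 2 \<delta> \<alpha> \<epsilon> M \<longrightarrow>
               (\<forall>X. dataset {1, 2} X \<longrightarrow> expected_size (Mstar X) \<ge> expected_size (M X)))"
  then obtain Mstar :: "(nat \<Rightarrow> nat) \<Rightarrow> nat set pmf" where
    ps: "partition_selection {1, 2} Mstar" and rdp: "is_rdp {1, 2} 2 \<delta> \<alpha> \<epsilon> Mstar"
    and opt: "\<And>M a b. partition_selection {1, 2} M \<and> is_rdp {1, 2} 2 \<delta> \<alpha> \<epsilon> M \<Longrightarrow>
      expected_size (M (pair_data a b)) \<le> expected_size (Mstar (pair_data a b))"
    using dataset_pair_data by blast
  define p where "p = pi_star \<delta> \<alpha> \<epsilon> 2"
  have pi_1: "pi_star \<delta> \<alpha> \<epsilon> 1 = \<delta>"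
    using L_fun_zero assms(2-4) by simp
  have p: "\<delta> \<le> p" "p \<le> 1" "bern_close \<delta> \<alpha> \<epsilon> p \<delta>"
    using L_fun_greatest[of \<alpha> \<delta> \<epsilon> \<delta>] assms(1-4) pi_1 by (simp_all add: p_def numeral_2_eq_2)
  have "partition_selection {1, 2} (bern_mech {1, 2} (level_both \<delta>)) \<and>
      is_rdp {1, 2} 2 \<delta> \<alpha> \<epsilon> (bern_mech {1, 2} (level_both \<delta>))"
    using assms(2-4) by (intro release_both_admissible) simp_all
  from opt[OF this, of 1 1] have "2 * \<delta> \<le> expected_size (Mstar (pair_data 1 1))"
    using assms(3,4) by (simp add: expected_size_bern_mech level_both_def pair_data_def)
  then have "expected_size (Mstar (pair_data 3 1)) \<le> 3 * \<delta>"
    using assms(3,4) by (intro expected_size_at_31_le[OF ps rdp] singleton_mass_zero_at_11[OF ps rdp]) simp_all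
  moreover have "partition_selection {1, 2} (bern_mech {1} (level_first \<delta> p)) \<and>
      is_rdp {1, 2} 2 \<delta> \<alpha> \<epsilon> (bern_mech {1} (level_first \<delta> p))"
    using assms(2,3) p by (intro release_first_admissible) simp_all
  from opt[OF this, of 3 1] have "p \<le> expected_size (Mstar (pair_data 3 1))"
    using assms(3) p by (simp add: expected_size_bern_mech level_first_def pair_data_def)
  ultimately show False
    using assms(5) pi_1 by (simp add: p_def)
qed

end
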